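(* Let $\mathcal{D},\mathcal{T}$ be distributions over a finite set $X$, where $\mathcal{T}=\sum_{i=1}^kc_i\mathcal{T}_i$ is a convex combination of distributions $\mathcal{T}_1,\dots,\mathcal{T}_k$ on $X$ with $c_i>0$ and $\sum_ic_i=1$. Suppose $\|\mathcal{D}-\mathcal{T}_i\|_{\mathtt{TV}}=1-\varepsilon_i$ with $\varepsilon_i\in[0,1/2]$ for each $i$. Then \[ \|\mathcal{D}-\mathcal{T}\|_{\mathtt{TV}}\ \ge\ 1-\sum_{i=1}^k(1+c_i)\varepsilon_i. \]
   Context: Total variation distance: $\|\mathcal{D}_1-\mathcal{D}_2\|_{\mathtt{TV}}=\frac12\sum_{x}|\mathcal{D}_1(x)-\mathcal{D}_2(x)|=\max_{A}(\mathcal{D}_1(A)-\mathcal{D}_2(A))$. *)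

theory Defs
  imports Complex_Main
begin

definition is_distr :: "'a set \<Rightarrow> ('a \<Rightarrow> real) \<Rightarrow> bool" where
  "is_distr X D \<longleftrightarrow> (\<forall>x\<in>X. D x \<ge> 0) \<and> (\<Sum>x\<in>X. D x) = 1"

definition tv_dist :: "'a set \<Rightarrow> ('a \<Rightarrow> real) \<Rightarrow> ('a \<Rightarrow> real) \<Rightarrow> real" where
  "tv_dist X D1 D2 = (1/2) * (\<Sum>x\<in>X. \<bar>D1 x - D2 x\<bar>)"

end

theory Submission
  imports Defs
begin

text \<open>
  The total variation distance is one minus the overlap \<open>\<Sum>x. min (D x) (E x)\<close> of the two
  mass functions. Pointwise, \<open>min (D x) (\<Sum>i. c i * T i x) \<le> \<Sum>i. min (D x) (T i x)\<close> because
  every weight is at most one, so the overlap of \<open>D\<close> with the mixture is at most the sum of the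
  overlaps \<open>\<epsilon>\<^sub>i\<close> of \<open>D\<close> with the components. This gives even \<open>1 - \<Sum>i. \<epsilon>\<^sub>i\<close> as a lower bound.
\<close>

lemma tv_dist_eq_one_minus_overlap:
  assumes "is_distr X D" "is_distr X E"
  shows "tv_dist X D E = 1 - (\<Sum>x\<in>X. min (D x) (E x))"
proof -
  have "(\<Sum>x\<in>X. \<bar>D x - E x\<bar>) = (\<Sum>x\<in>X. D x + E x - 2 * min (D x) (E x))"
    by (intro sum.cong) (auto simp: min_def)
  also have "\<dots> = (\<Sum>x\<in>X. D x) + (\<Sum>x\<in>X. E x) - 2 * (\<Sum>x\<in>X. min (D x) (E x))"
    by (simp add: sum.distrib sum_subtractf sum_distrib_left)
  finally show ?thesis
    using assms by (simp add: tv_dist_def is_distr_def)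
qed

lemma min_weighted_sum_le_sum_min:
  fixes a :: real
  assumes "finite I" "a \<ge> 0"
    and "\<And>i. i \<in> I \<Longrightarrow> 0 \<le> c i \<and> c i \<le> 1" "\<And>i. i \<in> I \<Longrightarrow> b i \<ge> 0"
  shows "min a (\<Sum>i\<in>I. c i * b i) \<le> (\<Sum>i\<in>I. min a (b i))"
  using assms(1,3,4)
proof (induction I rule: finite_induct)
  case empty
  then show ?case by simp
next
  case (insert j F)
  have "0 \<le> c j * b j" "c j * b j \<le> b j"
    using insert.prems by (auto simp: mult_left_le_one_le)
  moreover have "0 \<le> (\<Sum>i\<in>F. c i * b i)"
    using insert.prems by (intro sum_nonneg) auto
  ultimately have "min a (c j * b j + (\<Sum>i\<in>F. c i * b i)) \<le> min a (b j) + min a (\<Sum>i\<in>F. c i * b i)"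
    using \<open>a \<ge> 0\<close> by (auto simp: min_def)
  with insert show ?case by simp
qed

lemma is_distr_mixture:
  assumes "finite I" "\<And>i. i \<in> I \<Longrightarrow> is_distr X (T i)"
    and "\<And>i. i \<in> I \<Longrightarrow> c i \<ge> 0" "(\<Sum>i\<in>I. c i) = 1"
  shows "is_distr X (\<lambda>x. \<Sum>i\<in>I. c i * T i x)"
proof -
  have "(\<Sum>x\<in>X. \<Sum>i\<in>I. c i * T i x) = (\<Sum>i\<in>I. c i * (\<Sum>x\<in>X. T i x))"
    by (subst sum.swap) (simp add: sum_distrib_left)
  also have "\<dots> = 1"
    using assms(2,4) by (simp add: is_distr_def)
  finally show ?thesis
    using assms(2,3) by (auto simp: is_distr_def intro: sum_nonneg)
qed

lemma tv_dist_mixture_ge: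
  assumes "finite I" "is_distr X D" "\<And>i. i \<in> I \<Longrightarrow> is_distr X (T i)"
    and "\<And>i. i \<in> I \<Longrightarrow> c i \<ge> 0" "(\<Sum>i\<in>I. c i) = 1"
  shows "tv_dist X D (\<lambda>x. \<Sum>i\<in>I. c i * T i x) \<ge> 1 - (\<Sum>i\<in>I. 1 - tv_dist X D (T i))"
proof -
  have c_le_1: "c i \<le> 1" if "i \<in> I" for i
    using member_le_sum[of i I c] assms(1,4,5) that by simp
  have "(\<Sum>x\<in>X. min (D x) (\<Sum>i\<in>I. c i * T i x)) \<le> (\<Sum>x\<in>X. \<Sum>i\<in>I. min (D x) (T i x))"
  proof (intro sum_mono min_weighted_sum_le_sum_min)
    fix x assume "x \<in> X"
    then show "D x \<ge> 0" "\<And>i. i \<in> I \<Longrightarrow> T i x \<ge> 0"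
      using assms(2,3) by (auto simp: is_distr_def)
  qed (use assms(1,4) c_le_1 in auto)
  also have "\<dots> = (\<Sum>i\<in>I. 1 - tv_dist X D (T i))"
    by (subst sum.swap) (simp add: tv_dist_eq_one_minus_overlap assms(2,3))
  finally show ?thesis
    by (simp add: tv_dist_eq_one_minus_overlap assms is_distr_mixture)
qed

theorem lemma3p3:
  fixes X :: "'a set" and D :: "'a \<Rightarrow> real" and T :: "nat \<Rightarrow> 'a \<Rightarrow> real"
    and c :: "nat \<Rightarrow> real" and eps :: "nat \<Rightarrow> real" and k :: nat
  assumes "finite X"
    and "is_distr X D"
    and "\<And>i. i \<in> {1..k} \<Longrightarrow> is_distr X (T i)"
    and "\<And>i. i \<in> {1..k} \<Longrightarrow> c i > 0"
    and "(\<Sum>i=1..k. c i) = 1"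
    and "\<And>i. i \<in> {1..k} \<Longrightarrow> tv_dist X D (T i) = 1 - eps i"
    and "\<And>i. i \<in> {1..k} \<Longrightarrow> 0 \<le> eps i \<and> eps i \<le> 1/2"
  shows "tv_dist X D (\<lambda>x. \<Sum>i=1..k. c i * T i x) \<ge> 1 - (\<Sum>i=1..k. (1 + c i) * eps i)"
proof -
  have "1 - (\<Sum>i=1..k. (1 + c i) * eps i) \<le> 1 - (\<Sum>i=1..k. eps i)"
    using assms(4,7) by (intro diff_left_mono sum_mono) (simp add: algebra_simps less_imp_le)
  also have "\<dots> = 1 - (\<Sum>i=1..k. 1 - tv_dist X D (T i))"
    using assms(6) by simp
  also have "\<dots> \<le> tv_dist X D (\<lambda>x. \<Sum>i=1..k. c i * T i x)"
    using assms(2-5) by (intro tv_dist_mixture_ge) (auto intro: less_imp_le)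
  finally show ?thesis .
qed

end
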